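(* Let $D>0$, $r\in(0,1)$, $\theta_m=Dr^m$ ($m\in\mathbb N$), $\mathcal B=\mathcal B(\{\theta_m\})$, and $b_1,b_2>0$. There exists $C_4>0$, depending only on $b_1,b_2$ (besides $N,D,r$), such that for all $m,q\in\mathbb N$ with $m\ge2$ and $Dr^{m+1}\le1$ and every $g\in V$ satisfying (H), $\|\mathscr L_g^q-K^{(q)}_{g,m}\|_{\mathcal B\to\mathcal B}\le C_4^q(r^{2m})^q$.
   Context: $\Sigma_{\mathbf A}^+$ is the one-sided Markov shift of an $N\times N$ zero-one aperiodic matrix $\mathbf A$, $\sigma_{\mathbf A}$ the shift. $\mathrm{var}_k(\phi)=\sup\{|\phi(\omega)-\phi(\omega')|:\omega_j=\omega'_j,\ 0\le j\le k-1\}$; $V=\{\phi:\mathrm{var}_k(\phi)^{1/k}\to0\}$. $(\mathscr L_g\phi)(\omega)=\sum_{\sigma_{\mathbf A}\omega'=\omega}e^{g(\omega')}\phi(\omega')$. $\mathcal B(\{\theta_m\})=\{\phi\in V:\exists C\ge0,\ \mathrm{var}_k(\phi)\le C\theta_{k+1}^k\ \forall k\ge0\}$ with norm $\|\phi\|_\infty+\inf C$. Fix a Borel probability $\mu$ charging all nonempty open sets; $(E_m\phi)(\omega)=\mu([\omega|m])^{-1}\int_{[\omega|m]}\phi\,d\mu$, $[\omega|m]=\{\xi:\xi_j=\omega_j,0\le j\le m-1\}$. $K_{g,m}=\mathscr L_g\circ E_m$, $K^{(q)}_{g,m}=\mathscr L_g^q-(\mathscr L_g-K_{g,m})^q$.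 Condition (H) on $g\in V$: $e^{\max\mathrm{Re}\,g}\le b_1$ and $\mathrm{var}_k(g)\le b_2\theta_k^k$ for all $k\in\mathbb N$. *)

theory Defs
  imports "HOL-Probability.Probability"
begin

fun mpow :: "nat \<Rightarrow> (nat \<Rightarrow> nat \<Rightarrow> bool) \<Rightarrow> nat \<Rightarrow> nat \<Rightarrow> nat \<Rightarrow> nat" where
  "mpow N A 0 i j = (if i = j then 1 else 0)"
| "mpow N A (Suc k) i j = (\<Sum>l<N. mpow N A k i l * (if A l j then 1 else 0))"

definition aperiodic :: "nat \<Rightarrow> (nat \<Rightarrow> nat \<Rightarrow> bool) \<Rightarrow> bool" where
  "aperiodic N A \<longleftrightarrow> (\<exists>k. \<forall>i<N. \<forall>j<N. mpow N A k i j > 0)"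

definition Sigma_A :: "nat \<Rightarrow> (nat \<Rightarrow> nat \<Rightarrow> bool) \<Rightarrow> (nat \<Rightarrow> nat) set" where
  "Sigma_A N A = {\<omega>. \<forall>j. \<omega> j < N \<and> A (\<omega> j) (\<omega> (Suc j))}"

definition shift :: "(nat \<Rightarrow> nat) \<Rightarrow> (nat \<Rightarrow> nat)" where
  "shift \<omega> = (\<lambda>j. \<omega> (Suc j))"

definition theta :: "real \<Rightarrow> real \<Rightarrow> nat \<Rightarrow> real" where
  "theta D r m = D * r ^ m"

definition var :: "(nat \<Rightarrow> nat) set \<Rightarrow> nat \<Rightarrow> ((nat \<Rightarrow> nat) \<Rightarrow> complex) \<Rightarrow> real" where
  "var S k \<phi> = Sup {cmod (\<phi> \<omega> - \<phi> \<omega>') | \<omega> \<omega>'. \<omega> \<in> S \<and> \<omega>' \<in> S \<and> (\<forall>j<k. \<omega> j = \<omega>' j)}"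

text \<open>The space V (boundedness on S is implied by the limit condition; it only makes var real-valued).\<close>
definition Vspace :: "(nat \<Rightarrow> nat) set \<Rightarrow> ((nat \<Rightarrow> nat) \<Rightarrow> complex) set" where
  "Vspace S = {\<phi>. bounded (\<phi> ` S) \<and> (\<lambda>k. var S k \<phi> powr (1 / real k)) \<longlonglongrightarrow> 0}"

definition Bspace :: "(nat \<Rightarrow> nat) set \<Rightarrow> real \<Rightarrow> real \<Rightarrow> ((nat \<Rightarrow> nat) \<Rightarrow> complex) set" where
  "Bspace S D r = {\<phi> \<in> Vspace S. \<exists>C\<ge>0. \<forall>k. var S k \<phi> \<le> C * (theta D r (k + 1)) ^ k}"

definition supnorm :: "(nat \<Rightarrow> nat) set \<Rightarrow> ((nat \<Rightarrow> nat) \<Rightarrow> complex) \<Rightarrow> real" where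
  "supnorm S \<phi> = (SUP \<omega>\<in>S. cmod (\<phi> \<omega>))"

definition Bnorm :: "(nat \<Rightarrow> nat) set \<Rightarrow> real \<Rightarrow> real \<Rightarrow> ((nat \<Rightarrow> nat) \<Rightarrow> complex) \<Rightarrow> real" where
  "Bnorm S D r \<phi> = supnorm S \<phi> + Inf {C. C \<ge> 0 \<and> (\<forall>k. var S k \<phi> \<le> C * (theta D r (k + 1)) ^ k)}"

definition transfer :: "(nat \<Rightarrow> nat) set \<Rightarrow> ((nat \<Rightarrow> nat) \<Rightarrow> complex) \<Rightarrow> ((nat \<Rightarrow> nat) \<Rightarrow> complex) \<Rightarrow> (nat \<Rightarrow> nat) \<Rightarrow> complex" where
  "transfer S g \<phi> = (\<lambda>\<omega>. \<Sum>\<omega>'\<in>{\<omega>'\<in>S. shift \<omega>' = \<omega>}. exp (g \<omega>') * \<phi> \<omega>')"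

definition cyl :: "(nat \<Rightarrow> nat) set \<Rightarrow> (nat \<Rightarrow> nat) \<Rightarrow> nat \<Rightarrow> (nat \<Rightarrow> nat) set" where
  "cyl S \<omega> m = {\<xi> \<in> S. \<forall>j<m. \<xi> j = \<omega> j}"

definition condexp :: "(nat \<Rightarrow> nat) measure \<Rightarrow> (nat \<Rightarrow> nat) set \<Rightarrow> nat \<Rightarrow> ((nat \<Rightarrow> nat) \<Rightarrow> complex) \<Rightarrow> (nat \<Rightarrow> nat) \<Rightarrow> complex" where
  "condexp \<mu> S m \<phi> = (\<lambda>\<omega>. set_lebesgue_integral \<mu> (cyl S \<omega> m) \<phi> / complex_of_real (measure \<mu> (cyl S \<omega> m)))"

definition Kop :: "(nat \<Rightarrow> nat) measure \<Rightarrow> (nat \<Rightarrow> nat) set \<Rightarrow> ((nat \<Rightarrow> nat) \<Rightarrow> complex) \<Rightarrow> nat \<Rightarrow> ((nat \<Rightarrow> nat) \<Rightarrow> complex) \<Rightarrow> (nat \<Rightarrow> nat) \<Rightarrow> complex" where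
  "Kop \<mu> S g m = transfer S g \<circ> condexp \<mu> S m"

definition Kq :: "(nat \<Rightarrow> nat) measure \<Rightarrow> (nat \<Rightarrow> nat) set \<Rightarrow> ((nat \<Rightarrow> nat) \<Rightarrow> complex) \<Rightarrow> nat \<Rightarrow> nat \<Rightarrow> ((nat \<Rightarrow> nat) \<Rightarrow> complex) \<Rightarrow> (nat \<Rightarrow> nat) \<Rightarrow> complex" where
  "Kq \<mu> S g m q \<phi> = (transfer S g ^^ q) \<phi> - ((\<lambda>\<psi>. transfer S g \<psi> - Kop \<mu> S g m \<psi>) ^^ q) \<phi>"

definition condH :: "(nat \<Rightarrow> nat) set \<Rightarrow> real \<Rightarrow> real \<Rightarrow> real \<Rightarrow> real \<Rightarrow> ((nat \<Rightarrow> nat) \<Rightarrow> complex) \<Rightarrow> bool" where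
  "condH S D r b1 b2 g \<longleftrightarrow> g \<in> Vspace S \<and> (\<forall>\<omega>\<in>S. exp (Re (g \<omega>)) \<le> b1)
     \<and> (\<forall>k\<ge>1. var S k g \<le> b2 * (theta D r k) ^ k)"

definition admissible_measure :: "(nat \<Rightarrow> nat) set \<Rightarrow> (nat \<Rightarrow> nat) measure \<Rightarrow> bool" where
  "admissible_measure S \<mu> \<longleftrightarrow> sets \<mu> = sets borel \<and> prob_space \<mu> \<and> emeasure \<mu> S = 1
     \<and> (\<forall>U. open U \<and> U \<inter> S \<noteq> {} \<longrightarrow> emeasure \<mu> (U \<inter> S) > 0)"

end

theory Submission imports Defs begin

text \<open>Since \<open>K\<^sup>(\<^sup>q\<^sup>) = \<L>^q - (\<L> - K)^q\<close>, the claim is a bound on \<open>(\<L> - K)^q\<close>, and it suffices to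
  show \<open>\<parallel>\<L> - K\<parallel> \<le> C\<^sub>4 r^(2m)\<close>, where \<open>\<L> - K = \<L> \<circ> (I - E\<^sub>m)\<close>. If \<open>\<psi>\<close> has variation constant
  \<open>C\<close>, then \<open>f = \<psi> - E\<^sub>m \<psi>\<close> has sup norm at most \<open>var\<^sub>m \<psi> \<le> C \<theta>(m+1)^m\<close> and, \<open>E\<^sub>m \<psi>\<close> being
  constant on \<open>m\<close>-cylinders, the same \<open>k\<close>-variations as \<open>\<psi>\<close> for \<open>k \<ge> m\<close>. Applying \<open>\<L>\<close> costs a
  factor \<open>N exp (max Re g)\<close> and turns \<open>(k+1)\<close>-variations into \<open>k\<close>-variations. For \<open>k < m\<close> the
  \<open>k\<close>-variation of \<open>\<L> f\<close> is at most twice its sup norm; for \<open>k \<ge> m\<close> it is controlled by the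
  \<open>(k+1)\<close>-variations of \<open>f\<close> and \<open>g\<close>. In both cases the factor \<open>r^(2m)\<close> is gained by comparing
  \<open>\<theta>(m+1)^m\<close> and \<open>\<theta>(k+2)^(k+1)\<close> with \<open>\<theta>(k+1)^k\<close>, using \<open>D r^(m+1) \<le> 1\<close>.\<close>

section \<open>Variations and the space \<open>V\<close>\<close>

definition var_bounded :: "(nat \<Rightarrow> nat) set \<Rightarrow> real \<Rightarrow> real \<Rightarrow> real \<Rightarrow> ((nat \<Rightarrow> nat) \<Rightarrow> complex) \<Rightarrow> bool"
  where "var_bounded S D r C \<phi> \<longleftrightarrow> (\<forall>k. var S k \<phi> \<le> C * theta D r (k + 1) ^ k)"

lemma var_leI:
  assumes "S \<noteq> {}"
    and "\<And>\<omega> \<omega>'. \<omega> \<in> S \<Longrightarrow> \<omega>' \<in> S \<Longrightarrow> \<forall>j<k. \<omega> j = \<omega>' j \<Longrightarrow> cmod (\<phi> \<omega> - \<phi> \<omega>') \<le> c"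
  shows "var S k \<phi> \<le> c"
  unfolding var_def using assms by (intro cSup_least) auto

lemma norm_diff_le_var:
  assumes "bounded (\<phi> ` S)" "\<omega> \<in> S" "\<omega>' \<in> S" "\<forall>j<k. \<omega> j = \<omega>' j"
  shows "cmod (\<phi> \<omega> - \<phi> \<omega>') \<le> var S k \<phi>"
proof -
  obtain B where B: "\<forall>x\<in>S. cmod (\<phi> x) \<le> B" using assms(1) by (auto simp: bounded_iff)
  have "cmod (\<phi> x - \<phi> y) \<le> 2 * B" if "x \<in> S" "y \<in> S" for x y
    using B[rule_format, OF that(1)] B[rule_format, OF that(2)] norm_triangle_ineq4[of "\<phi> x" "\<phi> y"]
    by linarith
  then have "bdd_above {cmod (\<phi> \<omega> - \<phi> \<omega>') | \<omega> \<omega>'. \<omega> \<in> S \<and> \<omega>' \<in> S \<and> (\<forall>j<k. \<omega> j = \<omega>' j)}"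
    by (intro bdd_aboveI[where M = "2 * B"]) blast
  then show ?thesis unfolding var_def using assms by (intro cSup_upper) auto
qed

lemma var_nonneg: "bounded (\<phi> ` S) \<Longrightarrow> S \<noteq> {} \<Longrightarrow> 0 \<le> var S k \<phi>"
  using norm_diff_le_var[of \<phi> S _ _ k] by force

lemma var_le_twice_bound:
  assumes "S \<noteq> {}" "\<forall>x\<in>S. cmod (\<phi> x) \<le> M"
  shows "var S k \<phi> \<le> 2 * M"
proof (rule var_leI[OF assms(1)])
  fix \<omega> \<omega>' assume "\<omega> \<in> S" "\<omega>' \<in> S"
  then show "cmod (\<phi> \<omega> - \<phi> \<omega>') \<le> 2 * M"
    using assms(2) norm_triangle_ineq4[of "\<phi> \<omega>" "\<phi> \<omega>'"] by (smt (verit))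
qed

lemma open_cylinder: "open {\<xi> :: nat \<Rightarrow> nat. \<forall>j<m. \<xi> j = \<omega> j}"
proof -
  have "open {\<xi> :: nat \<Rightarrow> nat. \<forall>i\<in>{..<m}. \<xi> (id i) \<in> {\<omega> i}}"
    by (rule product_topology_basis') (simp_all add: discrete_topology_class.open_discrete)
  moreover have "{\<xi> :: nat \<Rightarrow> nat. \<forall>i\<in>{..<m}. \<xi> (id i) \<in> {\<omega> i}} = {\<xi>. \<forall>j<m. \<xi> j = \<omega> j}"
    by auto
  ultimately show ?thesis by simp
qed

lemma Vspace_ex_var_less:
  assumes "\<phi> \<in> Vspace S" "e > 0"
  shows "\<exists>k. var S k \<phi> < e"
proof -
  have "(\<lambda>k. var S k \<phi> powr (1 / real k)) \<longlonglongrightarrow> 0" using assms(1) by (simp add: Vspace_def)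
  then have "eventually (\<lambda>k. var S k \<phi> powr (1 / real k) < 1/2) sequentially"
    by (rule order_tendstoD) simp
  moreover have "eventually (\<lambda>k. (1/2::real) ^ k < e) sequentially"
    using LIMSEQ_power_zero[of "1/2::real"] assms(2) by (rule order_tendstoD) simp
  ultimately have "eventually (\<lambda>k. var S k \<phi> powr (1 / real k) < 1/2 \<and> (1/2::real) ^ k < e
      \<and> k \<ge> 1) sequentially"
    using eventually_ge_at_top[of "1::nat"] by (intro eventually_conj)
  then obtain k where k: "var S k \<phi> powr (1 / real k) < 1/2" "(1/2::real) ^ k < e" "k \<ge> 1"
    by (auto simp: eventually_sequentially)
  show ?thesis
  proof (cases "var S k \<phi> \<le> 0")
    case False
    then have "var S k \<phi> = (var S k \<phi> powr (1 / real k)) ^ k"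
      using k(3) by (simp add: powr_powr flip: powr_realpow)
    also have "\<dots> < (1/2) ^ k" using k(1,3) by (intro power_strict_mono) auto
    finally show ?thesis using k(2) by (meson order.strict_trans)
  qed (use assms(2) in \<open>intro exI[of _ k], linarith\<close>)
qed

lemma Vspace_continuous_on:
  assumes "\<phi> \<in> Vspace S"
  shows "continuous_on S \<phi>"
  unfolding continuous_on_topological
proof (intro ballI allI impI)
  fix x B assume x: "x \<in> S" and "open B" "\<phi> x \<in> B"
  then obtain e where e: "e > 0" "ball (\<phi> x) e \<subseteq> B" using openE by blast
  obtain k where k: "var S k \<phi> < e" using Vspace_ex_var_less[OF assms e(1)] by blast
  have bd: "bounded (\<phi> ` S)" using assms by (simp add: Vspace_def)
  have "\<phi> y \<in> B" if "y \<in> S" "\<forall>j<k. y j = x j" for y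
    using norm_diff_le_var[OF bd x that(1), of k] that(2) k e(2) by (auto simp: dist_norm)
  then show "\<exists>U. open U \<and> x \<in> U \<and> (\<forall>y\<in>S. y \<in> U \<longrightarrow> \<phi> y \<in> B)"
    using open_cylinder[of k x] by blast
qed

lemma Vspace_if_var_bounded:
  assumes "S \<noteq> {}" and bd: "bounded (\<phi> ` S)" and c: "c \<ge> 0" and v: "var_bounded S D r c \<phi>"
    and D: "D > 0" and r: "0 < r" "r < 1"
  shows "\<phi> \<in> Vspace S"
proof -
  define t where "t k = D * (r * r ^ k)" for k
  have t0: "t k > 0" for k using D r by (simp add: t_def)
  have up: "var S k \<phi> powr (1 / real k) \<le> root k (c + 1) * t k" if k: "k \<ge> 1" for k
  proof -
    have "var S k \<phi> \<le> c * t k ^ k" using v by (simp add: var_bounded_def t_def theta_def)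
    also have "\<dots> \<le> (c + 1) * t k ^ k" using t0[of k] by (intro mult_right_mono) (simp_all add: less_imp_le)
    finally have "var S k \<phi> \<le> (c + 1) * t k ^ k" .
    then have "var S k \<phi> powr (1 / real k) \<le> ((c + 1) * t k ^ k) powr (1 / real k)"
      using var_nonneg[OF bd \<open>S \<noteq> {}\<close>] by (intro powr_mono2) auto
    also have "\<dots> = root k ((c + 1) * t k ^ k)"
      using k c t0[of k] by (subst root_powr_inverse) auto
    also have "\<dots> = root k (c + 1) * t k"
      using k t0[of k] by (simp add: real_root_mult real_root_power_cancel less_imp_le)
    finally show ?thesis .
  qed
  have "t \<longlonglongrightarrow> D * (r * 0)"
    unfolding t_def using r by (intro tendsto_mult_left LIMSEQ_power_zero) auto
  then have lim: "(\<lambda>k. root k (c + 1) * t k) \<longlonglongrightarrow> 0"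
    using tendsto_mult[OF LIMSEQ_root_const] c by fastforce
  have "\<forall>\<^sub>F k in sequentially. var S k \<phi> powr (1 / real k) \<le> root k (c + 1) * t k"
    using eventually_ge_at_top[of "1::nat"] by eventually_elim (rule up)
  then have "(\<lambda>k. var S k \<phi> powr (1 / real k)) \<longlonglongrightarrow> 0"
    using tendsto_sandwich[OF always_eventually _ tendsto_const lim] by simp
  then show ?thesis using bd by (simp add: Vspace_def)
qed

section \<open>Conditional expectation on cylinders\<close>

lemma admissible_measure_nonempty: "admissible_measure S \<mu> \<Longrightarrow> S \<noteq> {}"
  by (auto simp: admissible_measure_def)

lemma cylinder_sets_measure_pos:
  assumes adm: "admissible_measure S \<mu>" and "\<omega> \<in> S"
  shows "cyl S \<omega> m \<in> sets \<mu>" "measure \<mu> (cyl S \<omega> m) > 0"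
proof -
  interpret prob_space \<mu> using adm by (simp add: admissible_measure_def)
  have "cyl S \<omega> m = {\<xi>. \<forall>j<m. \<xi> j = \<omega> j} \<inter> S" by (auto simp: cyl_def)
  then have pos: "emeasure \<mu> (cyl S \<omega> m) > 0"
    using adm open_cylinder[of m \<omega>] \<open>\<omega> \<in> S\<close> by (auto simp: admissible_measure_def)
  then show "cyl S \<omega> m \<in> sets \<mu>" using emeasure_notin_sets by force
  then show "measure \<mu> (cyl S \<omega> m) > 0" using pos by (simp add: emeasure_eq_measure)
qed

lemma set_integrable_Vspace:
  assumes adm: "admissible_measure S \<mu>" and "\<psi> \<in> Vspace S" "X \<in> sets \<mu>" "X \<subseteq> S"
  shows "set_integrable \<mu> X \<psi>"
proof -
  interpret prob_space \<mu> using adm by (simp add: admissible_measure_def)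
  have sets: "sets \<mu> = sets borel" using adm by (simp add: admissible_measure_def)
  obtain B where B: "B > 0" "\<forall>x\<in>S. cmod (\<psi> x) \<le> B"
    using \<open>\<psi> \<in> Vspace S\<close> by (auto simp: Vspace_def bounded_pos)
  have "continuous_on X \<psi>"
    using Vspace_continuous_on[OF \<open>\<psi> \<in> Vspace S\<close>] \<open>X \<subseteq> S\<close> continuous_on_subset by blast
  then have "(\<lambda>x. indicator X x *\<^sub>R \<psi> x) \<in> borel_measurable borel"
    using \<open>X \<in> sets \<mu>\<close> sets by (intro borel_measurable_continuous_on_indicator) auto
  then have "(\<lambda>x. indicator X x *\<^sub>R \<psi> x) \<in> borel_measurable \<mu>"
    by (simp add: measurable_cong_sets[OF sets refl])
  moreover have "norm (indicator X x *\<^sub>R \<psi> x) \<le> B" for x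
    using B \<open>X \<subseteq> S\<close> by (cases "x \<in> X") auto
  ultimately show ?thesis
    unfolding set_integrable_def by (intro integrable_const_bound[where B = B]) auto
qed

lemma norm_sub_condexp_le_var:
  assumes adm: "admissible_measure S \<mu>" and V: "\<psi> \<in> Vspace S" and "\<omega> \<in> S"
  shows "cmod (\<psi> \<omega> - condexp \<mu> S m \<psi> \<omega>) \<le> var S m \<psi>"
proof -
  interpret prob_space \<mu> using adm by (simp add: admissible_measure_def)
  define X where "X = cyl S \<omega> m"
  have X: "X \<in> sets \<mu>" "measure \<mu> X > 0"
    unfolding X_def by (fact cylinder_sets_measure_pos[OF adm \<open>\<omega> \<in> S\<close>])+
  have "X \<subseteq> S" by (auto simp: X_def cyl_def)
  have int: "set_integrable \<mu> X \<psi>" by (rule set_integrable_Vspace[OF adm V X(1) \<open>X \<subseteq> S\<close>])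
  have int_const: "set_integrable \<mu> X (\<lambda>_. c)" for c :: complex
    unfolding set_integrable_def using X(1) by (intro integrable_mult_indicator) auto
  have int_var: "set_integrable \<mu> X (\<lambda>_. var S m \<psi>)"
    unfolding set_integrable_def using X(1) by (intro integrable_mult_indicator) auto
  have int_diff: "set_integrable \<mu> X (\<lambda>x. \<psi> x - \<psi> \<omega>)"
    using set_integral_diff(1)[OF int int_const] .
  have bd: "bounded (\<psi> ` S)" using V by (simp add: Vspace_def)
  have close: "cmod (\<psi> x - \<psi> \<omega>) \<le> var S m \<psi>" if "x \<in> X" for x
    using that norm_diff_le_var[OF bd _ \<open>\<omega> \<in> S\<close>, of x m] by (auto simp: X_def cyl_def)
  have "norm (LINT x:X|\<mu>. \<psi> x - \<psi> \<omega>) \<le> (LINT x:X|\<mu>. cmod (\<psi> x - \<psi> \<omega>))"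
    using int_diff by (rule set_integral_norm_bound)
  also have "\<dots> \<le> (LINT x:X|\<mu>. var S m \<psi>)"
    using int_diff close by (intro set_integral_mono set_integrable_norm int_var)
  also have "\<dots> = measure \<mu> X * var S m \<psi>" using X(1) by (simp add: set_integral_const)
  finally have bound: "norm (LINT x:X|\<mu>. \<psi> x - \<psi> \<omega>) \<le> measure \<mu> X * var S m \<psi>" .
  have "(LINT x:X|\<mu>. \<psi> x) = of_real (measure \<mu> X) * \<psi> \<omega> + (LINT x:X|\<mu>. \<psi> x - \<psi> \<omega>)"
    using int int_const X(1) by (simp add: set_integral_const scaleR_conv_of_real)
  then have "\<psi> \<omega> - condexp \<mu> S m \<psi> \<omega> = - (LINT x:X|\<mu>. \<psi> x - \<psi> \<omega>) / of_real (measure \<mu> X)"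
    using X(2) by (simp add: condexp_def X_def[symmetric] field_simps)
  then show ?thesis
    using bound X(2) by (simp add: norm_divide divide_le_eq mult.commute)
qed

lemma condexp_eq_if_agree:
  "\<forall>j<m. x j = y j \<Longrightarrow> condexp \<mu> S m \<psi> x = condexp \<mu> S m \<psi> y"
  unfolding condexp_def cyl_def by simp

section \<open>The transfer operator on the shift space\<close>

lemma case_nat_in_Sigma_A_iff:
  assumes "\<omega> \<in> Sigma_A N A"
  shows "case_nat a \<omega> \<in> Sigma_A N A \<longleftrightarrow> a < N \<and> A a (\<omega> 0)"
proof
  assume "case_nat a \<omega> \<in> Sigma_A N A"
  then have "case_nat a \<omega> 0 < N \<and> A (case_nat a \<omega> 0) (case_nat a \<omega> (Suc 0))"
    unfolding Sigma_A_def by blast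
  then show "a < N \<and> A a (\<omega> 0)" by simp
next
  assume "a < N \<and> A a (\<omega> 0)"
  then have "case_nat a \<omega> j < N \<and> A (case_nat a \<omega> j) (case_nat a \<omega> (Suc j))" for j
    using assms unfolding Sigma_A_def by (cases j) auto
  then show "case_nat a \<omega> \<in> Sigma_A N A" unfolding Sigma_A_def by blast
qed

text \<open>The preimages of \<open>\<omega>\<close> under the shift are the admissible words \<open>a\<omega> = case_nat a \<omega>\<close>.\<close>
lemma transfer_Sigma_A:
  assumes "\<omega> \<in> Sigma_A N A"
  shows "transfer (Sigma_A N A) g f \<omega> =
    (\<Sum>a\<in>{a. a < N \<and> A a (\<omega> 0)}. exp (g (case_nat a \<omega>)) * f (case_nat a \<omega>))"
proof -
  have "{\<omega>' \<in> Sigma_A N A. shift \<omega>' = \<omega>} = (\<lambda>a. case_nat a \<omega>) ` {a. a < N \<and> A a (\<omega> 0)}"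
  proof (intro set_eqI iffI)
    fix x assume x: "x \<in> {\<omega>' \<in> Sigma_A N A. shift \<omega>' = \<omega>}"
    have "x j = case_nat (x 0) \<omega> j" for j
    proof (cases j)
      case (Suc i)
      have "shift x i = \<omega> i" using x by simp
      then show ?thesis using Suc by (simp add: shift_def)
    qed simp
    then have "x = case_nat (x 0) \<omega>" ..
    with x show "x \<in> (\<lambda>a. case_nat a \<omega>) ` {a. a < N \<and> A a (\<omega> 0)}"
      using case_nat_in_Sigma_A_iff[OF assms, of "x 0"] by auto
  next
    fix x assume "x \<in> (\<lambda>a. case_nat a \<omega>) ` {a. a < N \<and> A a (\<omega> 0)}"
    then obtain a where "a < N" "A a (\<omega> 0)" "x = case_nat a \<omega>" by blast
    then show "x \<in> {\<omega>' \<in> Sigma_A N A. shift \<omega>' = \<omega>}"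
      using case_nat_in_Sigma_A_iff[OF assms, of a] by (simp add: shift_def)
  qed
  moreover have "inj_on (\<lambda>a. case_nat a \<omega>) {a. a < N \<and> A a (\<omega> 0)}"
    by (rule inj_onI) (drule fun_cong[where x = 0], simp)
  ultimately show ?thesis by (simp add: transfer_def sum.reindex)
qed

lemma transfer_diff:
  "transfer S g \<phi> \<omega> - transfer S g \<psi> \<omega> = transfer S g (\<lambda>x. \<phi> x - \<psi> x) \<omega>"
  by (simp add: transfer_def sum_subtractf right_diff_distrib)

lemma transfer_minus_Kop:
  "transfer S g \<psi> - Kop \<mu> S g m \<psi> = transfer S g (\<lambda>x. \<psi> x - condexp \<mu> S m \<psi> x)"
  by (simp add: fun_eq_iff Kop_def transfer_diff)

lemma norm_sum_le_card_bound:
  assumes "card I \<le> N" "\<And>a. a \<in> I \<Longrightarrow> cmod (F a) \<le> c" "c \<ge> 0"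
  shows "cmod (\<Sum>a\<in>I. F a) \<le> N * c"
proof -
  have "cmod (\<Sum>a\<in>I. F a) \<le> (\<Sum>a\<in>I. c)" using assms(2) by (rule sum_norm_le)
  also have "\<dots> \<le> N * c" using assms(1,3) by (simp add: mult_right_mono)
  finally show ?thesis .
qed

lemma card_letters_le: "card {a. a < N \<and> P a} \<le> N"
  using card_mono[of "{..<N}" "{a. a < N \<and> P a}"] by auto

lemma norm_transfer_le:
  assumes "\<omega> \<in> Sigma_A N A" "\<forall>x\<in>Sigma_A N A. exp (Re (g x)) \<le> b1"
    and "\<forall>x\<in>Sigma_A N A. cmod (f x) \<le> M" "M \<ge> 0"
  shows "cmod (transfer (Sigma_A N A) g f \<omega>) \<le> N * (b1 * M)"
  unfolding transfer_Sigma_A[OF assms(1)]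
proof (rule norm_sum_le_card_bound[OF card_letters_le])
  fix a assume "a \<in> {a. a < N \<and> A a (\<omega> 0)}"
  then have "case_nat a \<omega> \<in> Sigma_A N A" using case_nat_in_Sigma_A_iff[OF assms(1)] by auto
  then have "exp (Re (g (case_nat a \<omega>))) \<le> b1" "cmod (f (case_nat a \<omega>)) \<le> M"
    using assms(2,3) by auto
  then show "cmod (exp (g (case_nat a \<omega>)) * f (case_nat a \<omega>)) \<le> b1 * M"
    unfolding norm_mult norm_exp_eq_Re by (intro mult_mono) (auto intro: order_trans[OF exp_ge_zero])
qed (use assms(1,2,4) in \<open>meson exp_ge_zero order_trans zero_le_mult_iff\<close>)

text \<open>A point and its preimages agree on one more coordinate, so the transfer operator turns
  a bound on \<open>(k + 1)\<close>-variations into a bound on \<open>k\<close>-variations.\<close>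
lemma var_transfer_le:
  assumes "Sigma_A N A \<noteq> {}" "k \<ge> 1" "c \<ge> 0"
    and F: "\<And>x y. x \<in> Sigma_A N A \<Longrightarrow> y \<in> Sigma_A N A \<Longrightarrow> \<forall>j<Suc k. x j = y j \<Longrightarrow>
      cmod (exp (g x) * f x - exp (g y) * f y) \<le> c"
  shows "var (Sigma_A N A) k (transfer (Sigma_A N A) g f) \<le> N * c"
proof (rule var_leI[OF assms(1)])
  fix \<omega> \<omega>' assume w: "\<omega> \<in> Sigma_A N A" "\<omega>' \<in> Sigma_A N A" and agree: "\<forall>j<k. \<omega> j = \<omega>' j"
  then have "\<omega>' 0 = \<omega> 0" using \<open>k \<ge> 1\<close> by auto
  then have "transfer (Sigma_A N A) g f \<omega> - transfer (Sigma_A N A) g f \<omega>' =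
      (\<Sum>a\<in>{a. a < N \<and> A a (\<omega> 0)}. exp (g (case_nat a \<omega>)) * f (case_nat a \<omega>)
        - exp (g (case_nat a \<omega>')) * f (case_nat a \<omega>'))"
    by (simp add: transfer_Sigma_A[OF w(1)] transfer_Sigma_A[OF w(2)] sum_subtractf)
  also have "cmod \<dots> \<le> N * c"
  proof (rule norm_sum_le_card_bound[OF card_letters_le _ \<open>c \<ge> 0\<close>])
    fix a assume "a \<in> {a. a < N \<and> A a (\<omega> 0)}"
    then have "case_nat a \<omega> \<in> Sigma_A N A" "case_nat a \<omega>' \<in> Sigma_A N A"
      using case_nat_in_Sigma_A_iff[OF w(1)] case_nat_in_Sigma_A_iff[OF w(2)] \<open>\<omega>' 0 = \<omega> 0\<close> by auto
    moreover have "\<forall>j<Suc k. case_nat a \<omega> j = case_nat a \<omega>' j"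
      using agree by (auto split: nat.split)
    ultimately show "cmod (exp (g (case_nat a \<omega>)) * f (case_nat a \<omega>)
        - exp (g (case_nat a \<omega>')) * f (case_nat a \<omega>')) \<le> c"
      by (rule F)
  qed
  finally show "cmod (transfer (Sigma_A N A) g f \<omega> - transfer (Sigma_A N A) g f \<omega>') \<le> N * c" .
qed

lemma norm_exp_le_of_Re_le: "Re a \<le> ln b \<Longrightarrow> b > 0 \<Longrightarrow> cmod (exp a) \<le> b"
  by (metis exp_le_cancel_iff exp_ln norm_exp_eq_Re)

lemma norm_exp_diff_le:
  assumes "Re a \<le> ln b" "Re a' \<le> ln b" "b > 0"
  shows "cmod (exp a - exp a') \<le> b * cmod (a - a')"
proof (rule field_differentiable_bound[where S = "{z. Re z \<le> ln b}" and f' = exp])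
  show "convex {z. Re z \<le> ln b}" by (rule convex_halfspace_Re_le)
  fix z assume "z \<in> {z. Re z \<le> ln b}"
  then show "cmod (exp z) \<le> b" using \<open>b > 0\<close> norm_exp_le_of_Re_le by blast
  show "(exp has_field_derivative exp z) (at z within {z. Re z \<le> ln b})"
    by (rule has_field_derivative_at_within[OF DERIV_exp])
qed (use assms in auto)

lemma norm_exp_mult_diff_le:
  assumes "Re a \<le> ln b" "Re a' \<le> ln b" "b > 0"
  shows "cmod (exp a * u - exp a' * v) \<le> b * cmod (u - v) + cmod v * (b * cmod (a - a'))"
proof -
  have "exp a * u - exp a' * v = exp a * (u - v) + v * (exp a - exp a')"
    by (simp add: algebra_simps)
  then have "cmod (exp a * u - exp a' * v) \<le> cmod (exp a) * cmod (u - v) + cmod v * cmod (exp a - exp a')"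
    by (metis norm_mult norm_triangle_ineq)
  also have "\<dots> \<le> b * cmod (u - v) + cmod v * (b * cmod (a - a'))"
    using norm_exp_le_of_Re_le[OF assms(1,3)] norm_exp_diff_le[OF assms]
    by (simp add: add_mono mult_right_mono mult_left_mono)
  finally show ?thesis .
qed

lemma theta_power: "theta D r j ^ n = D ^ n * r ^ (j * n)"
  by (simp add: theta_def power_mult_distrib power_mult)

lemma theta_power_pos: "D > 0 \<Longrightarrow> r > 0 \<Longrightarrow> theta D r j ^ n > 0"
  by (simp add: theta_def)

lemma theta_power_shift_le:
  assumes "m \<le> k" "D > 0" "0 < r" "r < 1"
  shows "theta D r (k + 2) ^ (k + 1) \<le> D * r ^ (2 * m) * theta D r (k + 1) ^ k"
proof -
  have "r ^ ((k + 2) * (k + 1)) \<le> r ^ (2 * m + (k + 1) * k)"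
    using assms by (intro power_decreasing) (auto simp: algebra_simps)
  then have "D ^ (k + 1) * r ^ ((k + 2) * (k + 1)) \<le> D ^ (k + 1) * r ^ (2 * m + (k + 1) * k)"
    using assms by (intro mult_left_mono) auto
  also have "\<dots> = D * r ^ (2 * m) * (D ^ k * r ^ ((k + 1) * k))"
    by (simp add: power_add)
  finally show ?thesis unfolding theta_power .
qed

lemma theta_power_Suc_le:
  assumes "m \<le> k" "D > 0" "0 < r" "r < 1" "D * r ^ (m + 1) \<le> 1"
  shows "theta D r (k + 1) ^ (k + 1) \<le> theta D r (k + 1) ^ k"
proof -
  have "D * r ^ (k + 1) \<le> D * r ^ (m + 1)"
    using assms by (intro mult_left_mono power_decreasing) auto
  then have "theta D r (k + 1) \<le> 1" using assms(5) by (simp add: theta_def)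
  then show ?thesis
    using theta_power_pos[OF assms(2,3)] by (simp add: mult_left_le)
qed

text \<open>Since \<open>D r^(m+1) \<le> 1\<close>, the power \<open>(D r^(m+1))^m\<close> still carries a factor \<open>r^(2m)\<close>
  after dividing out \<open>(D r^(k+1))^k\<close>, for every \<open>k < m\<close>.\<close>
lemma theta_power_le_of_less:
  assumes "k < m" "2 \<le> m" "D > 0" "0 < r" "r < 1" "D * r ^ (m + 1) \<le> 1"
  shows "theta D r (m + 1) ^ m \<le> (D + D\<^sup>2) * r ^ (2 * m) * theta D r (k + 1) ^ k"
proof (cases "k = m - 1")
  case True
  then have "m = k + 1" using assms(1) by simp
  then have "theta D r (m + 1) ^ m = D * r ^ (2 * m) * theta D r (k + 1) ^ k"
    unfolding theta_power
    by (simp add: power_add algebra_simps power_mult_distrib power_mult power2_eq_square)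
  also have "\<dots> \<le> (D + D\<^sup>2) * r ^ (2 * m) * theta D r (k + 1) ^ k"
    using assms theta_power_pos[of D r "k + 1" k] by (intro mult_right_mono) auto
  finally show ?thesis .
next
  case False
  then have "2 \<le> m - k" using assms(1) by auto
  define x where "x = D * r ^ (m + 1)"
  have x: "0 \<le> x" "x \<le> 1" using assms by (auto simp: x_def)
  have "theta D r (m + 1) ^ m = x ^ k * x ^ (m - k)"
    using assms(1) by (simp add: theta_def x_def flip: power_add)
  also have "\<dots> \<le> theta D r (k + 1) ^ k * (D\<^sup>2 * r ^ (2 * m))"
  proof (rule mult_mono)
    show "x ^ k \<le> theta D r (k + 1) ^ k" unfolding x_def theta_def
      using assms by (intro power_mono mult_left_mono power_decreasing) auto
    have "x ^ (m - k) \<le> x\<^sup>2" using \<open>2 \<le> m - k\<close> x by (rule power_decreasing)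
    also have "x\<^sup>2 = D\<^sup>2 * r ^ (2 * m) * r\<^sup>2" unfolding x_def
      by (simp add: power_mult_distrib power_mult[symmetric] power_add algebra_simps)
    also have "\<dots> \<le> D\<^sup>2 * r ^ (2 * m)"
      using assms by (simp add: mult_left_le power_le_one)
    finally show "x ^ (m - k) \<le> D\<^sup>2 * r ^ (2 * m)" .
  qed (use x assms in \<open>auto simp: theta_def\<close>)
  also have "\<dots> \<le> (D + D\<^sup>2) * r ^ (2 * m) * theta D r (k + 1) ^ k"
    using assms theta_power_pos[of D r "k + 1" k] by (simp add: algebra_simps mult_right_mono)
  finally show ?thesis .
qed

section \<open>The operator \<open>\<L> - K\<close>\<close>

locale transfer_residual =
  fixes N :: nat and A :: "nat \<Rightarrow> nat \<Rightarrow> bool" and D r b1 b2 C :: real and m :: nat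
    and g f :: "(nat \<Rightarrow> nat) \<Rightarrow> complex"
  assumes D: "D > 0" and r: "0 < r" "r < 1" and b1: "b1 > 0" and b2: "b2 \<ge> 0" and C: "C \<ge> 0"
    and m: "2 \<le> m" "D * r ^ (m + 1) \<le> 1"
    and nonempty: "Sigma_A N A \<noteq> {}"
    and g_exp: "\<forall>x\<in>Sigma_A N A. exp (Re (g x)) \<le> b1"
    and g_var: "\<forall>k\<ge>1. var (Sigma_A N A) k g \<le> b2 * theta D r k ^ k"
    and g_bounded: "bounded (g ` Sigma_A N A)"
    and f_sup: "\<forall>x\<in>Sigma_A N A. cmod (f x) \<le> C * theta D r (m + 1) ^ m"
    and f_var: "\<And>k x y. m \<le> k \<Longrightarrow> x \<in> Sigma_A N A \<Longrightarrow> y \<in> Sigma_A N A \<Longrightarrow> \<forall>j<k. x j = y j \<Longrightarrow>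
      cmod (f x - f y) \<le> C * theta D r (k + 1) ^ k"
begin

lemma norm_transfer_residual_le:
  assumes "\<omega> \<in> Sigma_A N A"
  shows "cmod (transfer (Sigma_A N A) g f \<omega>) \<le> N * (b1 * (C * theta D r (m + 1) ^ m))"
  using norm_transfer_le[OF assms g_exp f_sup] C less_imp_le[OF theta_power_pos[OF D r(1)]] by simp

lemma theta_power_residual_le: "theta D r (m + 1) ^ m \<le> (D + D\<^sup>2) * r ^ (2 * m)"
  using theta_power_le_of_less[of 0 m] m D r by simp

lemma sup_transfer_residual_le:
  assumes "\<omega> \<in> Sigma_A N A"
  shows "cmod (transfer (Sigma_A N A) g f \<omega>) \<le> N * b1 * (D + D\<^sup>2) * C * r ^ (2 * m)"
proof -
  have "N * (b1 * (C * theta D r (m + 1) ^ m)) \<le> N * (b1 * (C * ((D + D\<^sup>2) * r ^ (2 * m))))"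
    using theta_power_residual_le b1 C by (intro mult_left_mono) auto
  then show ?thesis using norm_transfer_residual_le[OF assms] by (simp add: mult_ac)
qed

lemma var_transfer_residual_le_low:
  assumes "k < m"
  shows "var (Sigma_A N A) k (transfer (Sigma_A N A) g f)
    \<le> 2 * N * b1 * (D + D\<^sup>2) * C * r ^ (2 * m) * theta D r (k + 1) ^ k"
proof -
  have "var (Sigma_A N A) k (transfer (Sigma_A N A) g f) \<le> 2 * (N * (b1 * (C * theta D r (m + 1) ^ m)))"
    using nonempty norm_transfer_residual_le by (intro var_le_twice_bound) auto
  also have "\<dots> \<le> 2 * (N * (b1 * (C * ((D + D\<^sup>2) * r ^ (2 * m) * theta D r (k + 1) ^ k))))"
    using theta_power_le_of_less[OF assms m(1) D r m(2)] b1 C by (intro mult_left_mono) auto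
  finally show ?thesis by (simp add: algebra_simps)
qed

text \<open>For \<open>k \<ge> m\<close> the variation of \<open>exp g \<cdot> f\<close> splits into the variation of \<open>f\<close>, which is
  that of the original function, and the variation of \<open>g\<close> weighted by the sup norm of \<open>f\<close>.\<close>
lemma var_transfer_residual_le_high:
  assumes "m \<le> k"
  shows "var (Sigma_A N A) k (transfer (Sigma_A N A) g f)
    \<le> N * b1 * (D + (D + D\<^sup>2) * b2) * C * r ^ (2 * m) * theta D r (k + 1) ^ k"
proof -
  define \<Theta> where "\<Theta> = theta D r (k + 1) ^ k"
  define c where "c = b1 * (C * theta D r (k + 2) ^ (k + 1))
    + C * theta D r (m + 1) ^ m * (b1 * (b2 * theta D r (k + 1) ^ (k + 1)))"
  have c_nonneg: "c \<ge> 0"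
    unfolding c_def using b1 b2 C less_imp_le[OF theta_power_pos[OF D r(1)]]
    by (intro add_nonneg_nonneg mult_nonneg_nonneg) (simp_all del: power_Suc)
  have g_Re: "Re (g x) \<le> ln b1" if "x \<in> Sigma_A N A" for x
    using g_exp that b1 by (metis exp_le_cancel_iff exp_ln)
  have pair: "cmod (exp (g x) * f x - exp (g y) * f y) \<le> c"
    if xy: "x \<in> Sigma_A N A" "y \<in> Sigma_A N A" "\<forall>j<Suc k. x j = y j" for x y
  proof -
    have "cmod (g x - g y) \<le> b2 * theta D r (k + 1) ^ (k + 1)"
      using norm_diff_le_var[OF g_bounded xy] g_var[rule_format, of "Suc k"] by simp
    moreover have "cmod (f x - f y) \<le> C * theta D r (k + 2) ^ (k + 1)"
      using f_var[OF _ xy] assms by simp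
    ultimately show ?thesis
      using norm_exp_mult_diff_le[OF g_Re[OF xy(1)] g_Re[OF xy(2)] b1, of "f x" "f y"] f_sup xy(2) b1
      unfolding c_def
      by (smt (verit, best) mult_left_mono mult_mono norm_ge_zero zero_le_mult_iff)
  qed
  have "c \<le> b1 * (C * (D * r ^ (2 * m) * \<Theta>))
      + C * ((D + D\<^sup>2) * r ^ (2 * m)) * (b1 * (b2 * \<Theta>))"
    unfolding c_def \<Theta>_def
    using theta_power_shift_le[OF assms D r] theta_power_Suc_le[OF assms D r m(2)]
      theta_power_residual_le b1 b2 C less_imp_le[OF theta_power_pos[OF D r(1)]] D r
    by (intro add_mono mult_left_mono mult_mono mult_right_mono) (simp_all del: power_Suc)
  also have "\<dots> = b1 * (D + (D + D\<^sup>2) * b2) * C * r ^ (2 * m) * \<Theta>"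
    by (simp add: algebra_simps)
  finally have "N * c \<le> N * (b1 * (D + (D + D\<^sup>2) * b2) * C * r ^ (2 * m) * \<Theta>)"
    by (intro mult_left_mono) auto
  moreover have "var (Sigma_A N A) k (transfer (Sigma_A N A) g f) \<le> N * c"
    using assms m(1) by (intro var_transfer_le[OF nonempty _ c_nonneg pair]) auto
  ultimately show ?thesis unfolding \<Theta>_def by (simp add: mult_ac)
qed

end

definition residual_const :: "nat \<Rightarrow> real \<Rightarrow> real \<Rightarrow> real \<Rightarrow> real"
  where "residual_const N D b1 b2 = N * b1 * (3 * D + 2 * D\<^sup>2 + (D + D\<^sup>2) * b2)"

lemma transfer_minus_Kop_estimate:
  assumes D: "D > 0" and r: "0 < r" "r < 1" and b: "b1 > 0" "b2 \<ge> 0"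
    and adm: "admissible_measure (Sigma_A N A) \<mu>" and m: "2 \<le> m" "D * r ^ (m + 1) \<le> 1"
    and H: "condH (Sigma_A N A) D r b1 b2 g"
    and \<psi>: "\<psi> \<in> Vspace (Sigma_A N A)" and C: "C \<ge> 0" "var_bounded (Sigma_A N A) D r C \<psi>"
  defines "T \<equiv> transfer (Sigma_A N A) g \<psi> - Kop \<mu> (Sigma_A N A) g m \<psi>"
    and "a \<equiv> residual_const N D b1 b2"
  shows "\<forall>\<omega>\<in>Sigma_A N A. cmod (T \<omega>) \<le> a * C * r ^ (2 * m)"
    and "var_bounded (Sigma_A N A) D r (a * C * r ^ (2 * m)) T"
proof -
  define f where "f x = \<psi> x - condexp \<mu> (Sigma_A N A) m \<psi> x" for x
  have T: "T = transfer (Sigma_A N A) g f" unfolding T_def f_def by (rule transfer_minus_Kop)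
  have var_\<psi>: "var (Sigma_A N A) k \<psi> \<le> C * theta D r (k + 1) ^ k" for k
    using C(2) by (simp add: var_bounded_def)
  have bd_\<psi>: "bounded (\<psi> ` Sigma_A N A)" using \<psi> by (simp add: Vspace_def)
  interpret transfer_residual N A D r b1 b2 C m g f
  proof
    show "\<forall>x\<in>Sigma_A N A. cmod (f x) \<le> C * theta D r (m + 1) ^ m"
      using norm_sub_condexp_le_var[OF adm \<psi>] var_\<psi> unfolding f_def by (meson order_trans)
    fix k x y assume "m \<le> k" "x \<in> Sigma_A N A" "y \<in> Sigma_A N A" "\<forall>j<k. x j = y j"
    then have "f x - f y = \<psi> x - \<psi> y"
      using condexp_eq_if_agree[of m x y] unfolding f_def by simp
    then show "cmod (f x - f y) \<le> C * theta D r (k + 1) ^ k"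
      using norm_diff_le_var[OF bd_\<psi> \<open>x \<in> _\<close> \<open>y \<in> _\<close> \<open>\<forall>j<k. x j = y j\<close>] var_\<psi> by (metis order_trans)
  qed (use assms admissible_measure_nonempty[OF adm] in \<open>auto simp: condH_def Vspace_def\<close>)
  have a_ge: "N * b1 * (D + D\<^sup>2) \<le> a" "2 * N * b1 * (D + D\<^sup>2) \<le> a" "N * b1 * (D + (D + D\<^sup>2) * b2) \<le> a"
    unfolding a_def residual_const_def using D b by (auto intro!: mult_left_mono simp: algebra_simps)
  have scale: "x * C * r ^ (2 * m) * t \<le> a * C * r ^ (2 * m) * t" if "x \<le> a" "t \<ge> 0" for x t
    using that C r by (intro mult_right_mono) auto
  show "\<forall>\<omega>\<in>Sigma_A N A. cmod (T \<omega>) \<le> a * C * r ^ (2 * m)"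
    using sup_transfer_residual_le scale[OF a_ge(1), of 1] unfolding T by force
  show "var_bounded (Sigma_A N A) D r (a * C * r ^ (2 * m)) T"
    unfolding var_bounded_def T
  proof
    fix k
    have \<Theta>: "theta D r (k + 1) ^ k \<ge> 0" using theta_power_pos[OF D r(1)] less_imp_le by blast
    show "var (Sigma_A N A) k (transfer (Sigma_A N A) g f) \<le> a * C * r ^ (2 * m) * theta D r (k + 1) ^ k"
    proof (cases "k < m")
      case True
      then show ?thesis using var_transfer_residual_le_low scale[OF a_ge(2) \<Theta>] by (meson order_trans)
    next
      case False
      then show ?thesis
        using var_transfer_residual_le_high[of k] scale[OF a_ge(3) \<Theta>] by (meson order_trans not_le)
    qed
  qed
qed

section \<open>Norm estimates in \<open>\<B>\<close>\<close>

lemma supnorm_nonneg: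
  assumes "S \<noteq> {}" "bounded (\<phi> ` S)"
  shows "0 \<le> supnorm S \<phi>"
proof -
  obtain \<omega> where "\<omega> \<in> S" using assms(1) by blast
  moreover have "bdd_above ((\<lambda>x. cmod (\<phi> x)) ` S)"
    using assms(2) by (auto simp: bounded_iff bdd_above_def)
  ultimately have "cmod (\<phi> \<omega>) \<le> supnorm S \<phi>" unfolding supnorm_def by (rule cSUP_upper)
  then show ?thesis by (meson norm_ge_zero order_trans)
qed

lemma Bnorm_le:
  assumes "S \<noteq> {}" "\<forall>\<omega>\<in>S. cmod (\<phi> \<omega>) \<le> M" "C \<ge> 0" "var_bounded S D r C \<phi>"
  shows "Bnorm S D r \<phi> \<le> M + C"
proof -
  have "supnorm S \<phi> \<le> M" unfolding supnorm_def using assms(1,2) by (intro cSUP_least) auto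
  moreover have "Inf {C. C \<ge> 0 \<and> var_bounded S D r C \<phi>} \<le> C"
    using assms(3,4) by (intro cInf_lower bdd_belowI[of _ 0]) auto
  ultimately show ?thesis by (simp add: Bnorm_def var_bounded_def)
qed

text \<open>The factor \<open>2\<close> arises because \<open>\<parallel>\<cdot>\<parallel>\<^sub>\<B>\<close> adds the sup norm to the best variation constant.\<close>
lemma Bspace_Bnorm_le_of_bounds:
  assumes "S \<noteq> {}" and \<psi>: "\<psi> \<in> Bspace S D r" and "b > 0" and D: "D > 0" and r: "0 < r" "r < 1"
    and bounds: "\<And>C. C \<ge> 0 \<Longrightarrow> var_bounded S D r C \<psi> \<Longrightarrow>
      (\<forall>\<omega>\<in>S. cmod (h \<omega>) \<le> b * C) \<and> var_bounded S D r (b * C) h"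
  shows "h \<in> Bspace S D r \<and> Bnorm S D r h \<le> 2 * b * Bnorm S D r \<psi>"
proof
  define Cs where "Cs = {C. C \<ge> 0 \<and> var_bounded S D r C \<psi>}"
  obtain C0 where C0: "C0 \<in> Cs" using \<psi> by (auto simp: Bspace_def Cs_def var_bounded_def)
  then have "bounded (h ` S)" "var_bounded S D r (b * C0) h" "b * C0 \<ge> 0"
    using bounds[of C0] \<open>b > 0\<close> by (auto simp: Cs_def bounded_iff)
  then show "h \<in> Bspace S D r"
    using Vspace_if_var_bounded[OF \<open>S \<noteq> {}\<close> _ _ _ D r] by (auto simp: Bspace_def var_bounded_def)
  have "Bnorm S D r h / (2 * b) \<le> Inf Cs"
  proof (rule cInf_greatest)
    fix C assume "C \<in> Cs"
    then have "Bnorm S D r h \<le> b * C + b * C"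
      using bounds[of C] \<open>b > 0\<close> by (intro Bnorm_le[OF \<open>S \<noteq> {}\<close>]) (auto simp: Cs_def)
    then show "Bnorm S D r h / (2 * b) \<le> C" using \<open>b > 0\<close> by (simp add: divide_le_eq)
  qed (use C0 in blast)
  also have "\<dots> \<le> Bnorm S D r \<psi>"
    using supnorm_nonneg[OF \<open>S \<noteq> {}\<close>, of \<psi>] \<psi>
    by (simp add: Bnorm_def Cs_def var_bounded_def Bspace_def Vspace_def)
  finally show "Bnorm S D r h \<le> 2 * b * Bnorm S D r \<psi>" using \<open>b > 0\<close> by (simp add: divide_le_eq mult.commute)
qed

lemma funpow_norm_le:
  fixes nrm :: "'a \<Rightarrow> 'b::linordered_semidom"
  assumes "\<And>x. x \<in> B \<Longrightarrow> T x \<in> B \<and> nrm (T x) \<le> c * nrm x" "c \<ge> 0" "x \<in> B"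
  shows "(T ^^ n) x \<in> B \<and> nrm ((T ^^ n) x) \<le> c ^ n * nrm x"
proof (induction n)
  case (Suc n)
  then have "nrm ((T ^^ Suc n) x) \<le> c * nrm ((T ^^ n) x)" using assms(1) by simp
  also have "\<dots> \<le> c ^ Suc n * nrm x"
    using Suc assms(2) mult_left_mono[of "nrm ((T ^^ n) x)" "c ^ n * nrm x" c] by (simp add: mult.assoc)
  finally show ?case using Suc assms(1) by simp
qed (use assms(3) in simp)

lemma transfer_funpow_minus_Kq:
  "(transfer S g ^^ q) \<phi> - Kq \<mu> S g m q \<phi> = ((\<lambda>\<psi>. transfer S g \<psi> - Kop \<mu> S g m \<psi>) ^^ q) \<phi>"
  by (simp add: Kq_def fun_eq_iff)

theorem lemma5p1:
  fixes N :: nat and A :: "nat \<Rightarrow> nat \<Rightarrow> bool" and D r b1 b2 :: real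
  assumes "N \<ge> 1" and "aperiodic N A"
    and "D > 0" and "0 < r" and "r < 1" and "b1 > 0" and "b2 > 0"
  shows "\<exists>C4>0. \<forall>\<mu> m q g.
           admissible_measure (Sigma_A N A) \<mu> \<longrightarrow> m \<ge> 2 \<longrightarrow> q \<ge> 1 \<longrightarrow> D * r ^ (m + 1) \<le> 1 \<longrightarrow>
           condH (Sigma_A N A) D r b1 b2 g \<longrightarrow>
           (\<forall>\<phi>\<in>Bspace (Sigma_A N A) D r.
              (transfer (Sigma_A N A) g ^^ q) \<phi> - Kq \<mu> (Sigma_A N A) g m q \<phi> \<in> Bspace (Sigma_A N A) D r
            \<and> Bnorm (Sigma_A N A) D r ((transfer (Sigma_A N A) g ^^ q) \<phi> - Kq \<mu> (Sigma_A N A) g m q \<phi>)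
                \<le> C4 ^ q * (r ^ (2 * m)) ^ q * Bnorm (Sigma_A N A) D r \<phi>)"
proof -
  define a where "a = residual_const N D b1 b2"
  have "a > 0"
    using assms by (auto simp: a_def residual_const_def intro!: mult_pos_pos add_pos_nonneg)
  show ?thesis
  proof (intro exI[of _ "2 * a"] conjI allI impI ballI)
    fix \<mu> m q g \<phi>
    assume adm: "admissible_measure (Sigma_A N A) \<mu>" and m: "2 \<le> m" "D * r ^ (m + 1) \<le> 1"
      and H: "condH (Sigma_A N A) D r b1 b2 g" and \<phi>: "\<phi> \<in> Bspace (Sigma_A N A) D r"
    define T where "T \<psi> = transfer (Sigma_A N A) g \<psi> - Kop \<mu> (Sigma_A N A) g m \<psi>" for \<psi>
    have "T \<psi> \<in> Bspace (Sigma_A N A) D r \<and>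
        Bnorm (Sigma_A N A) D r (T \<psi>) \<le> 2 * a * r ^ (2 * m) * Bnorm (Sigma_A N A) D r \<psi>"
      if "\<psi> \<in> Bspace (Sigma_A N A) D r" for \<psi>
      using Bspace_Bnorm_le_of_bounds[OF admissible_measure_nonempty[OF adm] that, of "a * r ^ (2 * m)"]
        transfer_minus_Kop_estimate[OF assms(3-6) _ adm m H, of \<psi>] that \<open>a > 0\<close> assms
      by (simp add: T_def a_def Bspace_def mult_ac)
    then have "(T ^^ q) \<phi> \<in> Bspace (Sigma_A N A) D r \<and>
        Bnorm (Sigma_A N A) D r ((T ^^ q) \<phi>) \<le> (2 * a * r ^ (2 * m)) ^ q * Bnorm (Sigma_A N A) D r \<phi>"
      using \<open>a > 0\<close> \<phi> by (intro funpow_norm_le) auto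
    then show "(transfer (Sigma_A N A) g ^^ q) \<phi> - Kq \<mu> (Sigma_A N A) g m q \<phi> \<in> Bspace (Sigma_A N A) D r"
      and "Bnorm (Sigma_A N A) D r ((transfer (Sigma_A N A) g ^^ q) \<phi> - Kq \<mu> (Sigma_A N A) g m q \<phi>)
        \<le> (2 * a) ^ q * (r ^ (2 * m)) ^ q * Bnorm (Sigma_A N A) D r \<phi>"
      by (simp_all add: transfer_funpow_minus_Kq T_def[abs_def] power_mult_distrib)
  qed (use \<open>a > 0\<close> in simp)
qed

end
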